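(* Let $a_0,\dots,a_n\in\mathbb{R}$ and let $L_n=a_0D^n+a_1D^{n-1}+\dots+a_{n-1}D+a_n$. If $\lambda_k$ is a real nonzero root of $a_0\lambda^n+a_1\lambda^{n-1}+\dots+a_{n-1}\lambda+a_n=0$, then for every harmonic $\mathbb{R}_{0,m}$-valued function $H_k(\underline{y})$ of $\underline{y}$ the function $$f_k(X)=\exp(\lambda_kz)H_k(\underline{y})-\frac{1}{2\lambda_k}\exp(\lambda_k\overline{z})\,\partial_{\underline{y}}H_k(\underline{y})$$ is a left monogenic solution of $L_nf=0$.
   Context: Let $m\ge 2$ and let $\mathbb{R}_{0,m}$ be the real Clifford algebra generated by $e_1,\dots,e_m$ with $e_i^2=-1$ and $e_ie_j=-e_je_i$ for $i\neq j$; all products are Clifford products. Identify $(x_0,\dots,x_m)\in\mathbb{R}^{m+1}$ with $X=x_0+\sum_{j=1}^m x_je_j$, and write $z=x_0+x_1e_1$, $\overline{z}=x_0-x_1e_1$, $\underline{y}=\sum_{j=2}^m x_je_j$; for real $r$, $\exp(rz)=e^{rx_0}(\cos rx_1+e_1\sin rx_1)$ and $\exp(r\overline z)=e^{rx_0}(\cos rx_1-e_1\sin rx_1)$. Operators: $\partial_X f=\partial_{x_0}f+\sum_{j=1}^m e_j\partial_{x_j}f$, $\partial_{\underline{y}}f=\sum_{j=2}^m e_j\partial_{x_j}f$; $f$ is left monogenic if $\partial_Xf=0$. For a left monogenic $f$ the hypercomplex derivative is $Df=\frac12\big(\partial_{x_0}-\sum_{j=1}^m e_j\partial_{x_j}\big)f$,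 and $D^j$ is its $j$-fold iterate. Harmonic means $\sum_{j=2}^m\partial_{x_j}^2H=0$. *)

theory Defs
  imports "HOL-Analysis.Analysis"
begin

text \<open>Elements of the Clifford algebra R_{0,m} are represented by their coefficient
  functions on blades: a blade is a set A of generator indices (A a subset of 1..m),
  standing for e_A = e_a1 ... e_ak with a1 < ... < ak.  Points of R^{m+1} are
  functions nat => real, of which only the coordinates 0..m are used.\<close>

type_synonym clif = "nat set \<Rightarrow> real"
type_synonym point = "nat \<Rightarrow> real"

definition cl_elem :: "nat \<Rightarrow> clif \<Rightarrow> bool" where
  "cl_elem m u \<longleftrightarrow> (\<forall>A. u A \<noteq> 0 \<longrightarrow> A \<subseteq> {1..m})"

definition cl_zero :: clif where "cl_zero = (\<lambda>A. 0)"
definition cl_scalar :: "real \<Rightarrow> clif" where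
  "cl_scalar r = (\<lambda>A. if A = {} then r else 0)"
definition cl_gen :: "nat \<Rightarrow> clif" where
  "cl_gen j = (\<lambda>A. if A = {j} then 1 else 0)"
definition cl_add :: "clif \<Rightarrow> clif \<Rightarrow> clif" where
  "cl_add u v = (\<lambda>A. u A + v A)"
definition cl_smul :: "real \<Rightarrow> clif \<Rightarrow> clif" where
  "cl_smul r u = (\<lambda>A. r * u A)"
definition cl_sum :: "(nat \<Rightarrow> clif) \<Rightarrow> nat set \<Rightarrow> clif" where
  "cl_sum g J = (\<lambda>A. \<Sum>j\<in>J. g j A)"

text \<open>Sign in e_A e_B = sign * e_(A symdiff B), for e_i^2 = -1 and anticommuting generators.\<close>
definition blade_sign :: "nat set \<Rightarrow> nat set \<Rightarrow> real" where
  "blade_sign A B = (-1) ^ (card {(a, b). a \<in> A \<and> b \<in> B \<and> b < a} + card (A \<inter> B))"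

definition cl_mult :: "nat \<Rightarrow> clif \<Rightarrow> clif \<Rightarrow> clif" where
  "cl_mult m u v = (\<lambda>C. \<Sum>A\<in>Pow {1..m}. \<Sum>B\<in>Pow {1..m}.
      if (A - B) \<union> (B - A) = C then blade_sign A B * u A * v B else 0)"

text \<open>exp(r z) and exp(r zbar), z = x0 + x1 e1.\<close>
definition cl_exp_z :: "real \<Rightarrow> point \<Rightarrow> clif" where
  "cl_exp_z r X = cl_add (cl_scalar (exp (r * X 0) * cos (r * X 1)))
                         (cl_smul (exp (r * X 0) * sin (r * X 1)) (cl_gen 1))"
definition cl_exp_zbar :: "real \<Rightarrow> point \<Rightarrow> clif" where
  "cl_exp_zbar r X = cl_add (cl_scalar (exp (r * X 0) * cos (r * X 1)))
                         (cl_smul (- (exp (r * X 0) * sin (r * X 1))) (cl_gen 1))"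

text \<open>Projection onto the coordinates of y = x2 e2 + ... + xm em.\<close>
definition yproj :: "nat \<Rightarrow> point \<Rightarrow> point" where
  "yproj m X = (\<lambda>j. if 2 \<le> j \<and> j \<le> m then X j else 0)"

definition pd :: "nat \<Rightarrow> (point \<Rightarrow> real) \<Rightarrow> point \<Rightarrow> real" where
  "pd j g X = deriv (\<lambda>t. g (X(j := t))) (X j)"
definition cl_pd :: "nat \<Rightarrow> (point \<Rightarrow> clif) \<Rightarrow> point \<Rightarrow> clif" where
  "cl_pd j F X = (\<lambda>A. pd j (\<lambda>Y. F Y A) X)"

definition coord_C1 :: "nat set \<Rightarrow> point set \<Rightarrow> (point \<Rightarrow> real) \<Rightarrow> bool" where
  "coord_C1 I S g \<longleftrightarrow>
     (\<forall>j\<in>I. (\<forall>X\<in>S. (\<lambda>t. g (X(j := t))) field_differentiable (at (X j)))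
            \<and> continuous_on S (pd j g))"
definition coord_C2 :: "nat set \<Rightarrow> point set \<Rightarrow> (point \<Rightarrow> real) \<Rightarrow> bool" where
  "coord_C2 I S g \<longleftrightarrow> coord_C1 I S g \<and> (\<forall>j\<in>I. coord_C1 I S (pd j g))"

definition dirac :: "nat \<Rightarrow> (point \<Rightarrow> clif) \<Rightarrow> point \<Rightarrow> clif" where
  "dirac m F X = cl_add (cl_pd 0 F X) (cl_sum (\<lambda>j. cl_mult m (cl_gen j) (cl_pd j F X)) {1..m})"
definition dirac_y :: "nat \<Rightarrow> (point \<Rightarrow> clif) \<Rightarrow> point \<Rightarrow> clif" where
  "dirac_y m F X = cl_sum (\<lambda>j. cl_mult m (cl_gen j) (cl_pd j F X)) {2..m}"
definition hyperD :: "nat \<Rightarrow> (point \<Rightarrow> clif) \<Rightarrow> point \<Rightarrow> clif" where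
  "hyperD m F X = cl_smul (1/2)
     (cl_add (cl_pd 0 F X) (cl_smul (-1) (cl_sum (\<lambda>j. cl_mult m (cl_gen j) (cl_pd j F X)) {1..m})))"

definition left_monogenic :: "nat \<Rightarrow> point set \<Rightarrow> (point \<Rightarrow> clif) \<Rightarrow> bool" where
  "left_monogenic m S F \<longleftrightarrow> open S \<and> (\<forall>A. coord_C1 {0..m} S (\<lambda>X. F X A))
      \<and> (\<forall>X\<in>S. dirac m F X = cl_zero)"

definition harmonic_y :: "nat \<Rightarrow> point set \<Rightarrow> (point \<Rightarrow> clif) \<Rightarrow> bool" where
  "harmonic_y m \<Omega> H \<longleftrightarrow> open \<Omega> \<and> (\<forall>A. coord_C2 {2..m} \<Omega> (\<lambda>y. H y A))
      \<and> (\<forall>y\<in>\<Omega>. cl_sum (\<lambda>j. cl_pd j (cl_pd j H) y) {2..m} = cl_zero)"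

definition Lop :: "nat \<Rightarrow> nat \<Rightarrow> (nat \<Rightarrow> real) \<Rightarrow> (point \<Rightarrow> clif) \<Rightarrow> point \<Rightarrow> clif" where
  "Lop m n a F X = cl_sum (\<lambda>i. cl_smul (a i) ((hyperD m ^^ (n - i)) F X)) {0..n}"

end

theory Submission
  imports Defs
begin

text \<open>Write exp(lam z) = c + s e_1 and exp(lam zbar) = c - s e_1. Left multiplication by e_1 sends
  (c + s e_1) u to (-s + c e_1) u, which is 1/lam times the x_1-derivative of exp(lam z) u. Hence
  in the Dirac operator the terms d/dx_0 and e_1 d/dx_1 cancel on exp(lam z) H and double on
  kappa exp(lam zbar) dy H, where dy is the Dirac operator in y; for kappa = -1/(2 lam) they leave
  -exp(lam zbar) dy H. For j >= 2, e_j anticommutes with e_1, so e_j exp(lam z) = exp(lam zbar) e_j,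
  and the y-terms contribute exp(lam zbar) dy H + kappa exp(lam z) dy (dy H), where
  dy (dy H) = -Delta H = 0 by the symmetry of second derivatives. So f is monogenic,
  D f = d/dx_0 f = lam f, and L_n f = p(lam) f = 0.\<close>

section \<open>Left multiplication by the generators\<close>

lemmas cl_linear_defs = cl_zero_def cl_add_def cl_smul_def cl_sum_def

lemma cl_add_cl_zero [simp]: "cl_add u cl_zero = u" "cl_add cl_zero u = u"
  by (simp_all add: cl_add_def cl_zero_def)

lemma cl_smul_cl_zero [simp]: "cl_smul r cl_zero = cl_zero"
  by (simp add: cl_smul_def cl_zero_def)

definition blade_toggle :: "nat \<Rightarrow> nat set \<Rightarrow> nat set" where
  "blade_toggle j C = (if j \<in> C then C - {j} else insert j C)"

text \<open>Left multiplication by e_j: since e_j e_B = blade_sign {j} B e_(blade_toggle j B), the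
  coefficient of e_C in e_j u is read off at the blade B = blade_toggle j C.\<close>
definition gen_mult :: "nat \<Rightarrow> nat \<Rightarrow> clif \<Rightarrow> clif" where
  "gen_mult m j u = (\<lambda>C. if C \<subseteq> {1..m}
     then blade_sign {j} (blade_toggle j C) * u (blade_toggle j C) else 0)"

lemma blade_toggle_toggle [simp]: "blade_toggle j (blade_toggle j C) = C"
  unfolding blade_toggle_def by auto

lemma blade_toggle_subset_iff: "j \<in> {1..m} \<Longrightarrow> blade_toggle j C \<subseteq> {1..m} \<longleftrightarrow> C \<subseteq> {1..m}"
  unfolding blade_toggle_def by auto

lemma blade_toggle_commute: "blade_toggle j (blade_toggle k C) = blade_toggle k (blade_toggle j C)"
  unfolding blade_toggle_def by auto

lemma cl_mult_cl_gen:
  assumes "j \<in> {1..m}"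
  shows "cl_mult m (cl_gen j) u = gen_mult m j u"
proof
  fix C :: "nat set"
  have toggle: "({j} - B) \<union> (B - {j}) = C \<longleftrightarrow> B = blade_toggle j C" for B
    unfolding blade_toggle_def by auto
  have "cl_mult m (cl_gen j) u C = (\<Sum>A\<in>Pow {1..m}. if A = {j} then
      (\<Sum>B\<in>Pow {1..m}. if B = blade_toggle j C then blade_sign {j} B * u B else 0) else 0)"
    unfolding cl_mult_def cl_gen_def by (intro sum.cong) (auto simp: toggle cong: if_cong)
  also have "\<dots> = gen_mult m j u C"
    using assms blade_toggle_subset_iff[OF assms, of C] by (simp add: sum.delta gen_mult_def)
  finally show "cl_mult m (cl_gen j) u C = gen_mult m j u C" .
qed

lemma cl_mult_cl_scalar:
  assumes "cl_elem m u"
  shows "cl_mult m (cl_scalar r) u = cl_smul r u"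
proof
  fix C :: "nat set"
  have "cl_mult m (cl_scalar r) u C = (\<Sum>A\<in>Pow {1..m}. if A = {} then
      (\<Sum>B\<in>Pow {1..m}. if B = C then r * u B else 0) else 0)"
    unfolding cl_mult_def cl_scalar_def
    by (intro sum.cong) (auto simp: blade_sign_def cong: if_cong)
  also have "\<dots> = cl_smul r u C"
    using assms by (auto simp: sum.delta cl_smul_def cl_elem_def)
  finally show "cl_mult m (cl_scalar r) u C = cl_smul r u C" .
qed

lemma cl_mult_cl_add_left: "cl_mult m (cl_add a b) u = cl_add (cl_mult m a u) (cl_mult m b u)"
  unfolding cl_mult_def cl_add_def
  by (auto simp: sum.distrib[symmetric] algebra_simps intro!: sum.cong)

lemma cl_mult_cl_smul_left: "cl_mult m (cl_smul r a) u = cl_smul r (cl_mult m a u)"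
  unfolding cl_mult_def cl_smul_def
  by (auto simp: sum_distrib_left algebra_simps intro!: sum.cong)

lemma cl_mult_cl_smul_right: "cl_mult m a (cl_smul r u) = cl_smul r (cl_mult m a u)"
  unfolding cl_mult_def cl_smul_def
  by (auto simp: sum_distrib_left algebra_simps intro!: sum.cong)

lemma blade_sign_singleton:
  "blade_sign {j} B = (-1) ^ (card {b\<in>B. b < j} + (if j \<in> B then 1 else 0))"
proof -
  have "{(a, b). a \<in> {j} \<and> b \<in> B \<and> b < a} = (\<lambda>b. (j, b)) ` {b\<in>B. b < j}" by auto
  then have "card {(a, b). a \<in> {j} \<and> b \<in> B \<and> b < a} = card {b\<in>B. b < j}"
    by (simp add: card_image inj_on_def)
  then show ?thesis unfolding blade_sign_def by simp
qed

lemma blade_sign_toggle_self: "blade_sign {j} (blade_toggle j B) = - blade_sign {j} B"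
proof -
  have "{b \<in> blade_toggle j B. b < j} = {b\<in>B. b < j}"
    unfolding blade_toggle_def by auto
  then show ?thesis unfolding blade_sign_singleton by (simp add: blade_toggle_def)
qed

lemma blade_sign_toggle_other:
  assumes "finite B" "k \<noteq> j"
  shows "blade_sign {j} (blade_toggle k B) = (if k < j then -1 else 1) * blade_sign {j} B"
proof -
  have mem: "j \<in> blade_toggle k B \<longleftrightarrow> j \<in> B"
    using assms unfolding blade_toggle_def by auto
  have fin: "finite {b\<in>B. b < j}" using assms by simp
  consider "k < j" "k \<in> B" | "k < j" "k \<notin> B" | "\<not> k < j" by blast
  then show ?thesis
  proof cases
    case 1
    have "{b \<in> blade_toggle k B. b < j} = {b\<in>B. b < j} - {k}"
      using 1 unfolding blade_toggle_def by auto
    moreover have "card {b\<in>B. b < j} = Suc (card ({b\<in>B. b < j} - {k}))"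
      using 1 fin by (intro card.remove) auto
    ultimately have "card {b\<in>B. b < j} = Suc (card {b \<in> blade_toggle k B. b < j})" by simp
    then show ?thesis using 1 unfolding blade_sign_singleton mem by simp
  next
    case 2
    have "{b \<in> blade_toggle k B. b < j} = insert k {b\<in>B. b < j}"
      using 2 unfolding blade_toggle_def by auto
    then show ?thesis using 2 fin unfolding blade_sign_singleton mem by simp
  next
    case 3
    have "{b \<in> blade_toggle k B. b < j} = {b\<in>B. b < j}"
      using 3 assms unfolding blade_toggle_def by auto
    then show ?thesis using 3 unfolding blade_sign_singleton mem by simp
  qed
qed

lemma blade_sign_square: "blade_sign A B * blade_sign A B = 1"
  unfolding blade_sign_def by (simp add: power_mult_distrib[symmetric])

lemma gen_mult_gen_mult_self:
  assumes "cl_elem m u" "j \<in> {1..m}"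
  shows "gen_mult m j (gen_mult m j u) = cl_smul (-1) u"
proof
  fix C
  show "gen_mult m j (gen_mult m j u) C = cl_smul (-1) u C"
    using assms blade_toggle_subset_iff[OF assms(2), of C]
    by (auto simp: gen_mult_def cl_smul_def cl_elem_def blade_sign_toggle_self blade_sign_square)
qed

lemma gen_mult_anticommute:
  assumes "j \<in> {1..m}" "k \<in> {1..m}" "j \<noteq> k"
  shows "gen_mult m j (gen_mult m k u) = cl_smul (-1) (gen_mult m k (gen_mult m j u))"
proof
  fix C
  show "gen_mult m j (gen_mult m k u) C = cl_smul (-1) (gen_mult m k (gen_mult m j u)) C"
  proof (cases "C \<subseteq> {1..m}")
    case True
    note toggle_subset = blade_toggle_subset_iff[OF assms(1)] blade_toggle_subset_iff[OF assms(2)]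
    define D where "D = blade_toggle j (blade_toggle k C)"
    have "finite D"
      using True toggle_subset unfolding D_def by (meson finite_atLeastAtMost finite_subset)
    then have "blade_sign {j} (blade_toggle k D) = (if k < j then -1 else 1) * blade_sign {j} D"
      "blade_sign {k} (blade_toggle j D) = (if j < k then -1 else 1) * blade_sign {k} D"
      using assms(3) blade_sign_toggle_other by auto
    moreover have "blade_toggle j C = blade_toggle k D" "blade_toggle k C = blade_toggle j D"
      "blade_toggle k (blade_toggle j C) = D"
      unfolding D_def by (metis blade_toggle_commute blade_toggle_toggle)+
    moreover have "blade_toggle j C \<subseteq> {1..m}" "blade_toggle k C \<subseteq> {1..m}"
      using True toggle_subset by auto
    ultimately show ?thesis
      using True assms(3) by (simp add: gen_mult_def cl_smul_def D_def[symmetric])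
  next
    case False
    then show ?thesis unfolding gen_mult_def cl_smul_def by auto
  qed
qed

lemma cl_elem_gen_mult: "cl_elem m (gen_mult m j u)"
  unfolding cl_elem_def gen_mult_def by auto

lemma gen_mult_cl_add: "gen_mult m j (cl_add u v) = cl_add (gen_mult m j u) (gen_mult m j v)"
  unfolding gen_mult_def cl_add_def by (auto simp: algebra_simps)

lemma gen_mult_cl_smul: "gen_mult m j (cl_smul r u) = cl_smul r (gen_mult m j u)"
  unfolding gen_mult_def cl_smul_def by (auto simp: algebra_simps)

lemma gen_mult_cl_sum: "gen_mult m j (cl_sum g J) = cl_sum (\<lambda>i. gen_mult m j (g i)) J"
  unfolding gen_mult_def cl_sum_def by (auto simp: sum_distrib_left)

lemma gen_mult_cl_zero: "gen_mult m j cl_zero = cl_zero"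
  unfolding gen_mult_def cl_zero_def by auto

lemma cl_elem_cl_sum: "(\<And>i. i \<in> J \<Longrightarrow> cl_elem m (g i)) \<Longrightarrow> cl_elem m (cl_sum g J)"
  unfolding cl_elem_def cl_sum_def by (metis (mono_tags, lifting) sum.neutral)

lemma cl_elem_cl_pd:
  assumes "\<And>Y. cl_elem m (F Y)"
  shows "cl_elem m (cl_pd j F X)"
  unfolding cl_elem_def
proof (intro allI impI)
  fix A assume nonzero: "cl_pd j F X A \<noteq> 0"
  show "A \<subseteq> {1..m}"
  proof (rule ccontr)
    assume "\<not> A \<subseteq> {1..m}"
    then have "(\<lambda>t. F (X(j := t)) A) = (\<lambda>t. 0)"
      using assms unfolding cl_elem_def by blast
    then show False using nonzero unfolding cl_pd_def pd_def by simp
  qed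
qed

lemma gen_mult_double_sum_symmetric:
  assumes "J \<subseteq> {1..m}"
    and sym: "\<And>j l. j \<in> J \<Longrightarrow> l \<in> J \<Longrightarrow> Q j l = Q l j"
    and elem: "\<And>j. j \<in> J \<Longrightarrow> cl_elem m (Q j j)"
  shows "cl_sum (\<lambda>j. gen_mult m j (cl_sum (\<lambda>l. gen_mult m l (Q j l)) J)) J
    = cl_smul (-1) (cl_sum (\<lambda>j. Q j j) J)"
proof
  fix C
  define a where "a j l = gen_mult m j (gen_mult m l (Q j l)) C" for j l
  have pair: "a j l + a l j = (if l = j then - 2 * Q j j C else 0)" if "j \<in> J" "l \<in> J" for j l
  proof (cases "j = l")
    case True
    then show ?thesis
      using gen_mult_gen_mult_self[OF elem] that assms(1) by (auto simp: a_def cl_smul_def)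
  next
    case False
    have "j \<in> {1..m}" "l \<in> {1..m}" using that assms(1) by auto
    then show ?thesis
      using gen_mult_anticommute[of l m j "Q j l"] sym[OF that] False
      by (simp add: a_def cl_smul_def)
  qed
  have "(\<Sum>j\<in>J. \<Sum>l\<in>J. a j l + a l j) = (\<Sum>j\<in>J. \<Sum>l\<in>J. if l = j then - 2 * Q j j C else 0)"
    using pair by (intro sum.cong refl) auto
  also have "\<dots> = (\<Sum>j\<in>J. - 2 * Q j j C)"
    using finite_subset[OF assms(1)] by simp
  finally have "(\<Sum>j\<in>J. \<Sum>l\<in>J. a j l + a l j) = (\<Sum>j\<in>J. - 2 * Q j j C)" .
  moreover have "(\<Sum>j\<in>J. \<Sum>l\<in>J. a l j) = (\<Sum>j\<in>J. \<Sum>l\<in>J. a j l)"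
    by (rule sum.swap)
  then have "(\<Sum>j\<in>J. \<Sum>l\<in>J. a j l + a l j) = 2 * (\<Sum>j\<in>J. \<Sum>l\<in>J. a j l)"
    by (simp add: sum.distrib)
  ultimately have "(\<Sum>j\<in>J. \<Sum>l\<in>J. a j l) = - (\<Sum>j\<in>J. Q j j C)"
    by (simp add: sum_distrib_left[symmetric] sum_negf)
  then show "cl_sum (\<lambda>j. gen_mult m j (cl_sum (\<lambda>l. gen_mult m l (Q j l)) J)) J C
    = cl_smul (-1) (cl_sum (\<lambda>j. Q j j) J) C"
    unfolding gen_mult_cl_sum by (simp add: a_def cl_linear_defs)
qed

section \<open>Multiplication by exp(lam z) and exp(lam zbar)\<close>

text \<open>exp_act m c s u = (c + s e_1) u, and exp_pair m kappa c s u v =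
  (c + s e_1) u + kappa (c - s e_1) v; with c = exp_cos lam X and s = exp_sin lam X these are
  exp(lam z) u and exp(lam z) u + kappa exp(lam zbar) v.\<close>

definition exp_act :: "nat \<Rightarrow> real \<Rightarrow> real \<Rightarrow> clif \<Rightarrow> clif" where
  "exp_act m c s u = cl_add (cl_smul c u) (cl_smul s (gen_mult m 1 u))"

definition exp_pair :: "nat \<Rightarrow> real \<Rightarrow> real \<Rightarrow> real \<Rightarrow> clif \<Rightarrow> clif \<Rightarrow> clif" where
  "exp_pair m \<kappa> c s u v = cl_add (exp_act m c s u) (cl_smul \<kappa> (exp_act m c (- s) v))"

definition exp_cos :: "real \<Rightarrow> point \<Rightarrow> real" where
  "exp_cos r X = exp (r * X 0) * cos (r * X 1)"

definition exp_sin :: "real \<Rightarrow> point \<Rightarrow> real" where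
  "exp_sin r X = exp (r * X 0) * sin (r * X 1)"

lemma cl_mult_exp_z:
  assumes "cl_elem m u" "1 \<le> m"
  shows "cl_mult m (cl_exp_z r X) u = exp_act m (exp_cos r X) (exp_sin r X) u"
  using assms
  by (simp add: cl_exp_z_def cl_mult_cl_add_left cl_mult_cl_smul_left cl_mult_cl_scalar
      cl_mult_cl_gen exp_act_def exp_cos_def exp_sin_def)

lemma cl_mult_exp_zbar:
  assumes "cl_elem m u" "1 \<le> m"
  shows "cl_mult m (cl_exp_zbar r X) u = exp_act m (exp_cos r X) (- exp_sin r X) u"
  using assms
  by (simp add: cl_exp_zbar_def cl_mult_cl_add_left cl_mult_cl_smul_left cl_mult_cl_scalar
      cl_mult_cl_gen exp_act_def exp_cos_def exp_sin_def)

lemma exp_act_cl_zero [simp]: "exp_act m c s cl_zero = cl_zero"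
  by (simp add: exp_act_def gen_mult_cl_zero)

lemma exp_pair_cl_zero: "exp_pair m \<kappa> c s cl_zero cl_zero = cl_zero"
  by (simp add: exp_pair_def)

lemma exp_pair_zero_coeffs: "exp_pair m \<kappa> 0 0 u v = cl_zero"
  by (simp add: exp_pair_def exp_act_def cl_linear_defs)

lemma gen_mult_one_exp_act:
  assumes "cl_elem m u" "1 \<le> m"
  shows "gen_mult m 1 (exp_act m c s u) = exp_act m (- s) c u"
  using assms gen_mult_gen_mult_self[of m u 1]
  by (simp add: exp_act_def gen_mult_cl_add gen_mult_cl_smul) (auto simp: cl_linear_defs)

lemma gen_mult_exp_act:
  assumes "j \<in> {2..m}"
  shows "gen_mult m j (exp_act m c s u) = exp_act m c (- s) (gen_mult m j u)"
  using assms gen_mult_anticommute[of j m 1 u]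
  by (simp add: exp_act_def gen_mult_cl_add gen_mult_cl_smul) (auto simp: cl_linear_defs)

lemma gen_mult_exp_pair:
  assumes "j \<in> {2..m}"
  shows "gen_mult m j (exp_pair m \<kappa> c s u v)
    = exp_pair m \<kappa> c (- s) (gen_mult m j u) (gen_mult m j v)"
  using assms by (simp add: exp_pair_def gen_mult_cl_add gen_mult_cl_smul gen_mult_exp_act)

lemma exp_act_cl_sum:
  "exp_act m c s (cl_sum u J) = cl_sum (\<lambda>j. exp_act m c s (u j)) J"
  by (simp add: exp_act_def gen_mult_cl_sum) (simp add: cl_linear_defs sum.distrib sum_distrib_left)

lemma exp_pair_cl_sum:
  "cl_sum (\<lambda>j. exp_pair m \<kappa> c s (u j) (v j)) J = exp_pair m \<kappa> c s (cl_sum u J) (cl_sum v J)"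
  by (simp add: exp_pair_def exp_act_cl_sum) (simp add: cl_linear_defs sum.distrib sum_distrib_left)

text \<open>The terms d/dx_0 and e_1 d/dx_1 of the Dirac operator applied to an exp_pair.\<close>
lemma exp_pair_plus_gen_mult_one:
  assumes "cl_elem m u" "cl_elem m v" "1 \<le> m"
  shows "cl_add (exp_pair m \<kappa> (r * c) (r * s) u v) (gen_mult m 1 (exp_pair m \<kappa> (- (r * s)) (r * c) u v))
    = cl_smul (2 * r * \<kappa>) (exp_act m c (- s) v)"
proof -
  have "gen_mult m 1 (exp_pair m \<kappa> (- (r * s)) (r * c) u v)
    = cl_add (exp_act m (- (r * c)) (- (r * s)) u) (cl_smul \<kappa> (exp_act m (r * c) (- (r * s)) v))"
    unfolding exp_pair_def gen_mult_cl_add gen_mult_cl_smul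
      gen_mult_one_exp_act[OF assms(1,3)] gen_mult_one_exp_act[OF assms(2,3)] by simp
  then show ?thesis
    by (simp add: exp_pair_def exp_act_def cl_linear_defs fun_eq_iff algebra_simps)
qed

section \<open>The Dirac operator and the hypercomplex derivative\<close>

lemma dirac_y_eq_gen_mult:
  "dirac_y m H y = cl_sum (\<lambda>j. gen_mult m j (cl_pd j H y)) {2..m}"
  unfolding dirac_y_def cl_sum_def by (simp add: cl_mult_cl_gen)

lemma dirac_split:
  assumes "1 \<le> m"
  shows "dirac m F X = cl_add (cl_pd 0 F X)
    (cl_add (gen_mult m 1 (cl_pd 1 F X)) (cl_sum (\<lambda>j. gen_mult m j (cl_pd j F X)) {2..m}))"
proof -
  have "{1..m} = insert 1 {2..m}" using assms by auto
  then show ?thesis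
    unfolding dirac_def by (simp add: cl_linear_defs cl_mult_cl_gen)
qed

lemma dirac_cong_scaled:
  assumes "\<And>j. j \<in> {0..m} \<Longrightarrow> cl_pd j F X = cl_smul r (cl_pd j G X)"
  shows "dirac m F X = cl_smul r (dirac m G X)"
proof -
  have "cl_sum (\<lambda>j. cl_mult m (cl_gen j) (cl_pd j F X)) {1..m}
    = cl_sum (\<lambda>j. cl_smul r (cl_mult m (cl_gen j) (cl_pd j G X))) {1..m}"
    unfolding cl_sum_def using assms by (auto simp: cl_mult_cl_smul_right intro!: sum.cong ext)
  then show ?thesis
    unfolding dirac_def using assms[of 0]
    by (simp add: cl_linear_defs sum_distrib_left algebra_simps)
qed

lemma hyperD_eq_cl_pd_zero:
  assumes "dirac m F X = cl_zero"
  shows "hyperD m F X = cl_pd 0 F X"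
proof
  fix A
  have "cl_pd 0 F X A + cl_sum (\<lambda>j. cl_mult m (cl_gen j) (cl_pd j F X)) {1..m} A = 0"
    using assms unfolding dirac_def cl_add_def cl_zero_def by metis
  then show "hyperD m F X A = cl_pd 0 F X A"
    unfolding hyperD_def cl_add_def cl_smul_def by simp
qed

lemma Lop_eigenfunction:
  assumes "\<And>k. (hyperD m ^^ k) F X = cl_smul (r ^ k) (F X)"
  shows "Lop m n a F X = cl_smul (\<Sum>i=0..n. a i * r ^ (n - i)) (F X)"
  using assms by (simp add: Lop_def cl_linear_defs sum_distrib_right mult.assoc)

section \<open>Partial derivatives along coordinates\<close>

lemma open_contains_coordinate_box:
  fixes W :: "point set"
  assumes "open W" "Y \<in> W"
  obtains d where "d > 0" "\<And>Z. (\<forall>i. \<bar>Z i - Y i\<bar> < d) \<Longrightarrow> Z \<in> W"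
proof -
  obtain e where e: "e > 0" "\<And>Z. dist Z Y < e \<Longrightarrow> Z \<in> W"
    using assms unfolding open_dist by blast
  have "Z \<in> W" if close: "\<forall>i. \<bar>Z i - Y i\<bar> < e / 3" for Z
  proof -
    define summand where "summand n = (1/2::real)^n * min (dist (Z (from_nat n)) (Y (from_nat n))) 1" for n
    have le: "summand n \<le> (1/2)^n * (e / 3)" for n
    proof -
      have "min (dist (Z (from_nat n)) (Y (from_nat n))) 1 \<le> e / 3"
        using close by (metis dist_real_def less_imp_le min.coboundedI1)
      then show ?thesis unfolding summand_def by (intro mult_left_mono) auto
    qed
    have geom: "summable (\<lambda>n. (1/2::real)^n * (e / 3))"
      by (intro summable_mult2) (simp add: summable_geometric_iff)
    have "summable summand"
      by (rule summable_comparison_test'[OF geom, of 0]) (use le in \<open>auto simp: summand_def\<close>)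
    then have "dist Z Y \<le> (\<Sum>n. (1/2::real)^n * (e / 3))"
      unfolding dist_fun_def summand_def[symmetric] by (rule suminf_le[OF le _ geom])
    also have "\<dots> = 2 * (e / 3)"
      using suminf_geometric[of "1/2::real"] suminf_mult2[of "\<lambda>n. (1/2::real)^n" "e / 3"]
      by (simp add: summable_geometric_iff)
    finally show ?thesis using e by simp
  qed
  then show thesis using e(1) by (intro that[of "e / 3"]) auto
qed

lemma continuous_on_fun_upd: "continuous_on UNIV (\<lambda>t::real. (Y::point)(j := t))"
proof (intro continuous_on_coordinatewise_then_product)
  fix i show "continuous_on UNIV (\<lambda>t. (Y(j := t)) i)"
    by (cases "i = j") (auto intro: continuous_intros)
qed

lemma open_fun_upd_preimage: "open (W::point set) \<Longrightarrow> open {t::real. Y(j := t) \<in> W}"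
  using continuous_on_fun_upd[of Y j] by (simp add: continuous_on_open_vimage vimage_def)

lemma continuous_on_coordinate [continuous_intros]: "continuous_on S (\<lambda>X::point. X i)"
  by (rule continuous_on_subset[OF continuous_on_product_coordinates]) simp

lemma pd_has_field_derivative:
  "(\<lambda>t. g (P(j := t))) field_differentiable (at (P j)) \<Longrightarrow>
    ((\<lambda>t. g (P(j := t))) has_field_derivative pd j g P) (at (P j))"
  unfolding pd_def by (simp add: DERIV_deriv_iff_field_differentiable)

definition has_cl_partial :: "nat \<Rightarrow> point set \<Rightarrow> (point \<Rightarrow> clif) \<Rightarrow> (point \<Rightarrow> clif) \<Rightarrow> bool" where
  "has_cl_partial j S F F' \<longleftrightarrow>
     (\<forall>X\<in>S. \<forall>A. ((\<lambda>t. F (X(j := t)) A) has_field_derivative F' X A) (at (X j)))"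

definition cl_continuous_on :: "point set \<Rightarrow> (point \<Rightarrow> clif) \<Rightarrow> bool" where
  "cl_continuous_on S F \<longleftrightarrow> (\<forall>A. continuous_on S (\<lambda>X. F X A))"

lemma has_cl_partial_imp_pd:
  "has_cl_partial j S F F' \<Longrightarrow> X \<in> S \<Longrightarrow> pd j (\<lambda>Y. F Y A) X = F' X A"
  unfolding has_cl_partial_def pd_def by (simp add: DERIV_imp_deriv)

lemma has_cl_partial_imp_cl_pd:
  "has_cl_partial j S F F' \<Longrightarrow> X \<in> S \<Longrightarrow> cl_pd j F X = F' X"
  unfolding cl_pd_def using has_cl_partial_imp_pd by auto

lemma has_cl_partial_cong:
  "has_cl_partial j S F F' \<Longrightarrow> (\<And>X. X \<in> S \<Longrightarrow> G' X = F' X) \<Longrightarrow> has_cl_partial j S F G'"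
  unfolding has_cl_partial_def by auto

lemma has_cl_partial_transform_open:
  assumes "open S" "has_cl_partial j S F F'" "\<And>X. X \<in> S \<Longrightarrow> G X = F X"
  shows "has_cl_partial j S G F'"
  unfolding has_cl_partial_def
proof (intro ballI allI)
  fix X A assume X: "X \<in> S"
  have "((\<lambda>t. F (X(j := t)) A) has_field_derivative F' X A) (at (X j))"
    using assms(2) X unfolding has_cl_partial_def by auto
  then show "((\<lambda>t. G (X(j := t)) A) has_field_derivative F' X A) (at (X j))"
    by (rule has_field_derivative_transform_within_open[OF _ open_fun_upd_preimage[OF assms(1), of X j]])
      (use X assms(3) in auto)
qed

lemma has_cl_partial_cl_add:
  "has_cl_partial j S F F' \<Longrightarrow> has_cl_partial j S G G' \<Longrightarrow>
    has_cl_partial j S (\<lambda>X. cl_add (F X) (G X)) (\<lambda>X. cl_add (F' X) (G' X))"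
  unfolding has_cl_partial_def cl_add_def by (auto intro: derivative_intros)

lemma has_cl_partial_cl_smul:
  assumes "\<And>X. X \<in> S \<Longrightarrow> ((\<lambda>t. c (X(j := t))) has_field_derivative c' X) (at (X j))"
    and "has_cl_partial j S F F'"
  shows "has_cl_partial j S (\<lambda>X. cl_smul (c X) (F X))
    (\<lambda>X. cl_add (cl_smul (c' X) (F X)) (cl_smul (c X) (F' X)))"
  unfolding has_cl_partial_def cl_add_def cl_smul_def
proof (intro ballI allI)
  fix X A assume X: "X \<in> S"
  have "((\<lambda>t. F (X(j := t)) A) has_field_derivative F' X A) (at (X j))"
    using assms(2) X unfolding has_cl_partial_def by blast
  from DERIV_mult[OF assms(1)[OF X] this]
  show "((\<lambda>t. c (X(j := t)) * F (X(j := t)) A) has_field_derivative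
      c' X * F X A + c X * F' X A) (at (X j))"
    by (simp add: algebra_simps)
qed

lemma has_cl_partial_cl_smul_const:
  "has_cl_partial j S F F' \<Longrightarrow> has_cl_partial j S (\<lambda>X. cl_smul r (F X)) (\<lambda>X. cl_smul r (F' X))"
  unfolding has_cl_partial_def cl_smul_def by (auto intro!: DERIV_cmult)

lemma has_cl_partial_gen_mult:
  "has_cl_partial j S F F' \<Longrightarrow> has_cl_partial j S (\<lambda>X. gen_mult m k (F X)) (\<lambda>X. gen_mult m k (F' X))"
  unfolding has_cl_partial_def gen_mult_def by (auto intro!: DERIV_cmult)

lemma has_cl_partial_cl_sum:
  "finite J \<Longrightarrow> (\<And>i. i \<in> J \<Longrightarrow> has_cl_partial j S (F i) (F' i)) \<Longrightarrow>
    has_cl_partial j S (\<lambda>X. cl_sum (\<lambda>i. F i X) J) (\<lambda>X. cl_sum (\<lambda>i. F' i X) J)"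
  unfolding has_cl_partial_def cl_sum_def by (auto intro!: DERIV_sum)

lemma cl_continuous_on_cl_add:
  "cl_continuous_on S F \<Longrightarrow> cl_continuous_on S G \<Longrightarrow> cl_continuous_on S (\<lambda>X. cl_add (F X) (G X))"
  unfolding cl_continuous_on_def cl_add_def by (auto intro: continuous_intros)

lemma cl_continuous_on_cl_smul:
  "continuous_on S c \<Longrightarrow> cl_continuous_on S F \<Longrightarrow> cl_continuous_on S (\<lambda>X. cl_smul (c X) (F X))"
  unfolding cl_continuous_on_def cl_smul_def by (auto intro: continuous_intros)

lemma cl_continuous_on_gen_mult:
  assumes "cl_continuous_on S F"
  shows "cl_continuous_on S (\<lambda>X. gen_mult m k (F X))"
  unfolding cl_continuous_on_def gen_mult_def
proof
  fix A
  show "continuous_on S (\<lambda>X. if A \<subseteq> {1..m}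
      then blade_sign {k} (blade_toggle k A) * F X (blade_toggle k A) else 0)"
    using assms unfolding cl_continuous_on_def
    by (cases "A \<subseteq> {1..m}") (auto intro: continuous_intros)
qed

lemma cl_continuous_on_cl_sum:
  "(\<And>i. i \<in> J \<Longrightarrow> cl_continuous_on S (F i)) \<Longrightarrow> cl_continuous_on S (\<lambda>X. cl_sum (\<lambda>i. F i X) J)"
  unfolding cl_continuous_on_def cl_sum_def by (auto intro!: continuous_intros)

lemma coord_C1_if_has_cl_partials:
  assumes "\<And>j. j \<in> I \<Longrightarrow> has_cl_partial j S F (D j)"
    and "\<And>j. j \<in> I \<Longrightarrow> cl_continuous_on S (D j)"
  shows "coord_C1 I S (\<lambda>X. F X A)"
  unfolding coord_C1_def
proof (rule ballI, rule conjI)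
  fix j assume j: "j \<in> I"
  show "\<forall>X\<in>S. (\<lambda>t. F (X(j := t)) A) field_differentiable at (X j)"
    using assms(1)[OF j] unfolding has_cl_partial_def field_differentiable_def by blast
next
  fix j assume j: "j \<in> I"
  show "continuous_on S (pd j (\<lambda>X. F X A))"
    using assms(2)[OF j] has_cl_partial_imp_pd[OF assms(1)[OF j]]
    unfolding cl_continuous_on_def by (metis (no_types, lifting) continuous_on_eq)
qed

text \<open>On the open set S the k-th iterate agrees with r^k F, so it is again monogenic and
  hyperD acts on it as d/dx_0.\<close>
lemma hyperD_power_eigenfunction:
  assumes "open S"
    and partials: "\<And>j. j \<in> {0..m} \<Longrightarrow> has_cl_partial j S F (D j)"
    and monogenic: "\<And>X. X \<in> S \<Longrightarrow> dirac m F X = cl_zero"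
    and eigen: "\<And>X. X \<in> S \<Longrightarrow> D 0 X = cl_smul r (F X)"
    and "X \<in> S"
  shows "(hyperD m ^^ k) F X = cl_smul (r ^ k) (F X)"
proof -
  have "\<forall>X\<in>S. (hyperD m ^^ k) F X = cl_smul (r ^ k) (F X)"
  proof (induction k)
    case 0
    show ?case by (simp add: cl_smul_def)
  next
    case (Suc k)
    let ?G = "(hyperD m ^^ k) F"
    have "has_cl_partial j S ?G (\<lambda>X. cl_smul (r ^ k) (D j X))" if "j \<in> {0..m}" for j
      by (rule has_cl_partial_transform_open[OF assms(1) has_cl_partial_cl_smul_const[OF partials[OF that]]])
        (use Suc.IH in simp)
    then have pd_G: "cl_pd j ?G X = cl_smul (r ^ k) (cl_pd j F X)" if "X \<in> S" "j \<in> {0..m}" for X j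
      using that has_cl_partial_imp_cl_pd partials by metis
    show ?case
    proof
      fix X assume X: "X \<in> S"
      have "dirac m ?G X = cl_smul (r ^ k) (dirac m F X)"
        by (rule dirac_cong_scaled) (rule pd_G[OF X])
      then have "dirac m ?G X = cl_zero"
        using monogenic[OF X] by (simp add: cl_smul_def cl_zero_def)
      then have "hyperD m ?G X = cl_smul (r ^ k) (cl_pd 0 F X)"
        by (simp add: hyperD_eq_cl_pd_zero pd_G[OF X])
      then show "(hyperD m ^^ Suc k) F X = cl_smul (r ^ Suc k) (F X)"
        using has_cl_partial_imp_cl_pd[OF partials X] eigen[OF X] by (simp add: cl_smul_def algebra_simps)
    qed
  qed
  then show ?thesis using assms(5) by blast
qed

section \<open>Functions of the coordinates x_2, ..., x_m\<close>

lemma yproj_fun_upd_in: "j \<in> {2..m} \<Longrightarrow> yproj m (X(j := t)) = (yproj m X)(j := t)"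
  unfolding yproj_def by auto

lemma yproj_fun_upd_out: "j \<notin> {2..m} \<Longrightarrow> yproj m (X(j := t)) = yproj m X"
  unfolding yproj_def by auto

lemma continuous_on_yproj: "continuous_on UNIV (yproj m)"
proof (intro continuous_on_coordinatewise_then_product)
  fix i show "continuous_on UNIV (\<lambda>X. yproj m X i)"
    unfolding yproj_def by (cases "2 \<le> i \<and> i \<le> m") (auto intro: continuous_intros)
qed

lemma open_yproj_preimage: "open \<Omega> \<Longrightarrow> open {X. yproj m X \<in> \<Omega>}"
  using continuous_on_yproj[of m] by (simp add: continuous_on_open_vimage vimage_def)

lemma cl_continuous_on_comp_yproj:
  assumes "\<And>A. continuous_on \<Omega> (\<lambda>Y. K Y A)"
  shows "cl_continuous_on {X. yproj m X \<in> \<Omega>} (\<lambda>X. K (yproj m X))"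
  unfolding cl_continuous_on_def
  by (intro allI continuous_on_compose2[OF assms continuous_on_subset[OF continuous_on_yproj]]) auto

lemma has_cl_partial_comp_yproj_in:
  assumes "j \<in> {2..m}"
    and "\<And>A Y. Y \<in> \<Omega> \<Longrightarrow> (\<lambda>t. K (Y(j := t)) A) field_differentiable (at (Y j))"
  shows "has_cl_partial j {X. yproj m X \<in> \<Omega>} (\<lambda>X. K (yproj m X)) (\<lambda>X. cl_pd j K (yproj m X))"
  unfolding has_cl_partial_def
proof (intro ballI allI)
  fix X A assume "X \<in> {X. yproj m X \<in> \<Omega>}"
  then have "(\<lambda>t. K ((yproj m X)(j := t)) A) field_differentiable (at (yproj m X j))"
    using assms(2) by simp
  then have "((\<lambda>t. K ((yproj m X)(j := t)) A) has_field_derivative cl_pd j K (yproj m X) A)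
      (at (yproj m X j))"
    using pd_has_field_derivative by (simp add: cl_pd_def)
  then show "((\<lambda>t. K (yproj m (X(j := t))) A) has_field_derivative cl_pd j K (yproj m X) A) (at (X j))"
    using assms(1) by (simp add: yproj_fun_upd_in yproj_def[of m X])
qed

lemma has_cl_partial_comp_yproj_out:
  "j \<notin> {2..m} \<Longrightarrow> has_cl_partial j S (\<lambda>X. K (yproj m X)) (\<lambda>X. cl_zero)"
  unfolding has_cl_partial_def cl_zero_def by (simp add: yproj_fun_upd_out)

lemma fun_upd_increment_bound:
  fixes g :: "point \<Rightarrow> real"
  assumes diff: "\<And>t. t \<in> ball (Z i) r \<Longrightarrow> (\<lambda>u. g (Z(i := u))) field_differentiable (at t)"
    and bound: "\<And>t. t \<in> ball (Z i) r \<Longrightarrow> \<bar>pd i g (Z(i := t))\<bar> \<le> M"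
    and t: "t \<in> ball (Z i) r"
  shows "\<bar>g (Z(i := t)) - g Z\<bar> \<le> M * \<bar>t - Z i\<bar>"
proof -
  have deriv: "((\<lambda>u. g (Z(i := u))) has_field_derivative pd i g (Z(i := s))) (at s within ball (Z i) r)"
    if "s \<in> ball (Z i) r" for s
    using diff[OF that] unfolding pd_def
    by (simp add: DERIV_deriv_iff_field_differentiable has_field_derivative_at_within)
  have "norm (g (Z(i := t)) - g (Z(i := Z i))) \<le> M * norm (t - Z i)"
  proof (rule field_differentiable_bound[OF convex_ball deriv])
    show "Z i \<in> ball (Z i) r" using t by (metis centre_in_ball le_less_trans mem_ball zero_le_dist)
  qed (use bound t in auto)
  then show ?thesis by simp
qed

lemma yproj_increment_bound:
  fixes g :: "point \<Rightarrow> real"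
  assumes "d > 0"
    and box: "\<And>Y. (\<forall>i. \<bar>Y i - yproj m X0 i\<bar> < d) \<Longrightarrow> Y \<in> W"
    and diff: "\<And>j Y. j \<in> {2..m} \<Longrightarrow> Y \<in> W \<Longrightarrow> (\<lambda>t. g (Y(j := t))) field_differentiable (at (Y j))"
    and bound: "\<And>j Y. j \<in> {2..m} \<Longrightarrow> Y \<in> W \<Longrightarrow> \<bar>pd j g Y\<bar> \<le> M"
    and close: "\<forall>i\<in>{2..m}. \<bar>X i - X0 i\<bar> < d"
  shows "\<bar>g (yproj m X) - g (yproj m X0)\<bar> \<le> M * (\<Sum>i=2..m. \<bar>X i - X0 i\<bar>)"
proof -
  define y0 where "y0 = yproj m X0"
  define z where "z J = (\<lambda>i. if i \<in> J then X i else y0 i)" for J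
  have telescope: "\<bar>g (z J) - g y0\<bar> \<le> M * (\<Sum>i\<in>J. \<bar>X i - X0 i\<bar>)"
    if "finite J" "J \<subseteq> {2..m}" for J
    using that
  proof (induction J rule: finite_induct)
    case empty
    show ?case by (simp add: z_def)
  next
    case (insert a J)
    then have a: "a \<in> {2..m}" and J: "J \<subseteq> {2..m}" by auto
    have y0a: "y0 a = X0 a" using a by (simp add: y0_def yproj_def)
    have in_W: "(z J)(a := t) \<in> W" if "t \<in> ball (z J a) d" for t
    proof (rule box, intro allI)
      fix i
      show "\<bar>((z J)(a := t)) i - yproj m X0 i\<bar> < d"
        using that close a J insert(2) \<open>d > 0\<close>
        by (cases "i = a") (auto simp: z_def y0_def yproj_def dist_real_def abs_minus_commute)
    qed
    have "\<bar>g ((z J)(a := X a)) - g (z J)\<bar> \<le> M * \<bar>X a - z J a\<bar>"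
    proof (rule fun_upd_increment_bound)
      fix t assume "t \<in> ball (z J a) d"
      then show "(\<lambda>u. g ((z J)(a := u))) field_differentiable at t" "\<bar>pd a g ((z J)(a := t))\<bar> \<le> M"
        using diff[OF a in_W] bound[OF a in_W] by simp_all
    next
      show "X a \<in> ball (z J a) d"
        using close a insert(2) y0a by (simp add: z_def dist_real_def abs_minus_commute)
    qed
    moreover have "(z J)(a := X a) = z (insert a J)" "z J a = X0 a"
      using insert(2) y0a by (auto simp: z_def)
    ultimately show ?case
      using insert J by (simp add: algebra_simps)
  qed
  have "z {2..m} = yproj m X"
    by (auto simp: z_def y0_def yproj_def)
  then show ?thesis
    using telescope[of "{2..m}"] by (simp add: y0_def)
qed

lemma tendsto_coordinate: "((\<lambda>X::point. X i) \<longlongrightarrow> X0 i) (at X0)"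
proof -
  have "isCont (\<lambda>X::point. X i) X0"
    using continuous_on_coordinate[of UNIV i] continuous_on_eq_continuous_at[OF open_UNIV] by blast
  then show ?thesis by (simp add: isCont_def)
qed

lemma eventually_coordinates_close:
  assumes "d > 0" "finite I"
  shows "eventually (\<lambda>X::point. \<forall>i\<in>I. \<bar>X i - X0 i\<bar> < d) (at X0)"
proof (rule eventually_ball_finite[OF assms(2)], intro ballI)
  fix i
  from tendstoD[OF tendsto_coordinate assms(1)] show "eventually (\<lambda>X. \<bar>X i - X0 i\<bar> < d) (at X0)"
    by (simp add: dist_real_def)
qed

lemma continuous_on_finite_family_locally_bounded:
  fixes h :: "'i \<Rightarrow> 'a::topological_space \<Rightarrow> real"
  assumes "open \<Omega>" "y0 \<in> \<Omega>" "finite J" "\<And>j. j \<in> J \<Longrightarrow> continuous_on \<Omega> (h j)"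
  obtains W M where "open W" "y0 \<in> W" "W \<subseteq> \<Omega>" "\<And>j Y. j \<in> J \<Longrightarrow> Y \<in> W \<Longrightarrow> \<bar>h j Y\<bar> \<le> M"
proof
  let ?W = "\<Omega> \<inter> (\<Inter>j\<in>J. h j -` ball (h j y0) 1 \<inter> \<Omega>)"
  show "open ?W"
    using assms by (intro open_Int open_INT) (auto simp: continuous_on_open_vimage)
  show "y0 \<in> ?W" "?W \<subseteq> \<Omega>" using assms(2) by auto
  fix j Y assume "j \<in> J" "Y \<in> ?W"
  then have "h j Y \<in> ball (h j y0) 1" by blast
  then have "\<bar>h j Y - h j y0\<bar> < 1" by (simp add: dist_real_def abs_minus_commute)
  moreover have "\<bar>h j y0\<bar> \<le> (\<Sum>j\<in>J. \<bar>h j y0\<bar>)"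
    using assms(3) \<open>j \<in> J\<close> by (intro member_le_sum) auto
  ultimately show "\<bar>h j Y\<bar> \<le> 1 + (\<Sum>j\<in>J. \<bar>h j y0\<bar>)" by linarith
qed

text \<open>Continuity of g is not assumed: only the coordinates 2..m survive the projection,
  and in those g has continuous, hence locally bounded, partial derivatives.\<close>
lemma continuous_on_comp_yproj:
  fixes g :: "point \<Rightarrow> real"
  assumes "open \<Omega>"
    and diff: "\<And>j Y. j \<in> {2..m} \<Longrightarrow> Y \<in> \<Omega> \<Longrightarrow> (\<lambda>t. g (Y(j := t))) field_differentiable (at (Y j))"
    and cont: "\<And>j. j \<in> {2..m} \<Longrightarrow> continuous_on \<Omega> (pd j g)"
  shows "continuous_on {X. yproj m X \<in> \<Omega>} (\<lambda>X. g (yproj m X))"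
proof -
  have "isCont (\<lambda>X. g (yproj m X)) X0" if X0: "yproj m X0 \<in> \<Omega>" for X0
  proof (rule continuous_on_finite_family_locally_bounded[OF assms(1) X0 finite_atLeastAtMost cont])
    fix W M
    assume W: "open W" "yproj m X0 \<in> W" "W \<subseteq> \<Omega>"
      and bound: "\<And>j Y. j \<in> {2..m} \<Longrightarrow> Y \<in> W \<Longrightarrow> \<bar>pd j g Y\<bar> \<le> M"
    show ?thesis
    proof (rule open_contains_coordinate_box[OF W(1,2)])
      fix d assume d: "d > 0" "\<And>Y. \<forall>i. \<bar>Y i - yproj m X0 i\<bar> < d \<Longrightarrow> Y \<in> W"
      have diff_W: "\<And>j Y. j \<in> {2..m} \<Longrightarrow> Y \<in> W \<Longrightarrow> (\<lambda>t. g (Y(j := t))) field_differentiable (at (Y j))"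
        using diff W(3) by blast
      have estimate: "\<bar>g (yproj m X) - g (yproj m X0)\<bar> \<le> M * (\<Sum>i=2..m. \<bar>X i - X0 i\<bar>)"
        if "\<forall>i\<in>{2..m}. \<bar>X i - X0 i\<bar> < d" for X
        by (rule yproj_increment_bound[OF d(1) d(2) diff_W bound that])
      have "eventually (\<lambda>X. norm (g (yproj m X) - g (yproj m X0))
          \<le> M * (\<Sum>i=2..m. \<bar>X i - X0 i\<bar>)) (at X0)"
        using eventually_coordinates_close[OF d(1), of "{2..m}" X0]
        by (rule eventually_mono) (simp_all add: estimate)
      moreover have "((\<lambda>X. M * (\<Sum>i=2..m. \<bar>X i - X0 i\<bar>)) \<longlongrightarrow> 0) (at X0)"
        by (intro tendsto_mult_right_zero tendsto_null_sum tendsto_rabs_zero LIM_zero tendsto_coordinate)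
      ultimately have "((\<lambda>X. g (yproj m X) - g (yproj m X0)) \<longlongrightarrow> 0) (at X0)"
        by (rule Lim_null_comparison)
      then show ?thesis unfolding isCont_def by (simp add: LIM_zero_iff)
    qed
  qed
  then show ?thesis
    using open_yproj_preimage[OF assms(1), of m] continuous_on_eq_continuous_at by blast
qed

lemma second_difference_mean_value:
  fixes g :: "point \<Rightarrow> real"
  assumes "j \<noteq> l" "h > 0"
    and square: "\<And>s t. a \<le> s \<Longrightarrow> s \<le> a + h \<Longrightarrow> b \<le> t \<Longrightarrow> t \<le> b + h \<Longrightarrow> Y(j := s, l := t) \<in> W"
    and dj: "\<And>Z. Z \<in> W \<Longrightarrow> (\<lambda>t. g (Z(j := t))) field_differentiable (at (Z j))"
    and djl: "\<And>Z. Z \<in> W \<Longrightarrow> (\<lambda>t. pd j g (Z(l := t))) field_differentiable (at (Z l))"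
  obtains s t where "a < s" "s < a + h" "b < t" "t < b + h"
    "g (Y(j := a + h, l := b + h)) - g (Y(j := a + h, l := b)) - g (Y(j := a, l := b + h))
      + g (Y(j := a, l := b)) = h * h * pd l (pd j g) (Y(j := s, l := t))"
proof -
  define \<phi> where "\<phi> s t = Y(j := s, l := t)" for s t
  have \<phi>_upd: "(\<phi> s t)(j := u) = \<phi> u t" "(\<phi> s t)(l := u) = \<phi> s u" for s t u
    unfolding \<phi>_def using assms(1) by (auto simp: fun_eq_iff)
  have \<phi>_apply: "\<phi> s t j = s" "\<phi> s t l = t" for s t
    unfolding \<phi>_def using assms(1) by auto
  have deriv_j: "((\<lambda>u. g (\<phi> u t)) has_field_derivative pd j g (\<phi> s t)) (at s)"
    if "a \<le> s" "s \<le> a + h" "b \<le> t" "t \<le> b + h" for s t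
    using pd_has_field_derivative[OF dj[OF square[OF that, folded \<phi>_def]]] by (simp add: \<phi>_upd \<phi>_apply)
  have deriv_l: "((\<lambda>u. pd j g (\<phi> s u)) has_field_derivative pd l (pd j g) (\<phi> s t)) (at t)"
    if "a \<le> s" "s \<le> a + h" "b \<le> t" "t \<le> b + h" for s t
    using pd_has_field_derivative[OF djl[OF square[OF that, folded \<phi>_def]]] by (simp add: \<phi>_upd \<phi>_apply)
  have "\<exists>s. a < s \<and> s < a + h \<and>
    (g (\<phi> (a + h) (b + h)) - g (\<phi> (a + h) b)) - (g (\<phi> a (b + h)) - g (\<phi> a b))
      = (a + h - a) * (pd j g (\<phi> s (b + h)) - pd j g (\<phi> s b))"
    by (rule MVT2) (use assms(2) in \<open>auto intro!: derivative_intros deriv_j\<close>)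
  then obtain s where s: "a < s" "s < a + h"
    "(g (\<phi> (a + h) (b + h)) - g (\<phi> (a + h) b)) - (g (\<phi> a (b + h)) - g (\<phi> a b))
      = h * (pd j g (\<phi> s (b + h)) - pd j g (\<phi> s b))"
    by auto
  have "\<exists>t. b < t \<and> t < b + h \<and>
    pd j g (\<phi> s (b + h)) - pd j g (\<phi> s b) = (b + h - b) * pd l (pd j g) (\<phi> s t)"
    by (rule MVT2) (use assms(2) s in \<open>auto intro!: deriv_l\<close>)
  then obtain t where t: "b < t" "t < b + h"
    "pd j g (\<phi> s (b + h)) - pd j g (\<phi> s b) = h * pd l (pd j g) (\<phi> s t)"
    by auto
  show thesis
    by (rule that[OF s(1,2) t(1,2)]) (use s(3) t(3) in \<open>simp add: \<phi>_def algebra_simps\<close>)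
qed

lemma mixed_partials_meet:
  fixes g :: "point \<Rightarrow> real"
  assumes "j \<noteq> l" "d > 0"
    and box: "\<And>Z. (\<forall>i. \<bar>Z i - Y i\<bar> < d) \<Longrightarrow> Z \<in> W"
    and dj: "\<And>Z. Z \<in> W \<Longrightarrow> (\<lambda>t. g (Z(j := t))) field_differentiable (at (Z j))"
    and dl: "\<And>Z. Z \<in> W \<Longrightarrow> (\<lambda>t. g (Z(l := t))) field_differentiable (at (Z l))"
    and djl: "\<And>Z. Z \<in> W \<Longrightarrow> (\<lambda>t. pd j g (Z(l := t))) field_differentiable (at (Z l))"
    and dlj: "\<And>Z. Z \<in> W \<Longrightarrow> (\<lambda>t. pd l g (Z(j := t))) field_differentiable (at (Z j))"
  obtains P Q where "P \<in> W" "Q \<in> W" "pd l (pd j g) P = pd j (pd l g) Q"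
proof -
  define h where "h = d / 2"
  have h: "h > 0" "h < d" using assms(2) unfolding h_def by auto
  note twist = fun_upd_twist[OF assms(1)]
  have square: "Y(j := s, l := t) \<in> W"
    if "Y j \<le> s" "s \<le> Y j + h" "Y l \<le> t" "t \<le> Y l + h" for s t
    using that h by (intro box) auto
  obtain s1 t1 where st1: "Y j < s1" "s1 < Y j + h" "Y l < t1" "t1 < Y l + h"
    "g (Y(j := Y j + h, l := Y l + h)) - g (Y(j := Y j + h, l := Y l)) - g (Y(j := Y j, l := Y l + h))
      + g (Y(j := Y j, l := Y l)) = h * h * pd l (pd j g) (Y(j := s1, l := t1))"
    by (rule second_difference_mean_value[OF assms(1) h(1) square dj djl])
  obtain s2 t2 where st2: "Y l < t2" "t2 < Y l + h" "Y j < s2" "s2 < Y j + h"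
    "g (Y(l := Y l + h, j := Y j + h)) - g (Y(l := Y l + h, j := Y j)) - g (Y(l := Y l, j := Y j + h))
      + g (Y(l := Y l, j := Y j)) = h * h * pd j (pd l g) (Y(l := t2, j := s2))"
    by (rule second_difference_mean_value[OF assms(1)[symmetric] h(1) square[unfolded twist] dl dlj])
  have "Y(l := u, j := Y j) = Y(l := u)" for u
    using assms(1) by (auto simp: fun_eq_iff)
  then have "g (Y(j := Y j + h, l := Y l + h)) - g (Y(j := Y j + h, l := Y l))
      - g (Y(j := Y j, l := Y l + h)) + g (Y(j := Y j, l := Y l))
    = g (Y(l := Y l + h, j := Y j + h)) - g (Y(l := Y l + h, j := Y j))
      - g (Y(l := Y l, j := Y j + h)) + g (Y(l := Y l, j := Y j))"
    by (simp add: twist)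
  with st1(5) st2(5) have "h * h * pd l (pd j g) (Y(j := s1, l := t1)) = h * h * pd j (pd l g) (Y(l := t2, j := s2))"
    by linarith
  then have "pd l (pd j g) (Y(j := s1, l := t1)) = pd j (pd l g) (Y(l := t2, j := s2))"
    using h(1) by simp
  moreover have "Y(j := s1, l := t1) \<in> W" "Y(l := t2, j := s2) \<in> W"
    using st1(1-4) st2(1-4) square[of s1 t1] square[of s2 t2] by (auto simp: twist)
  ultimately show thesis by (intro that)
qed

text \<open>Schwarz's theorem, with continuity of g itself not assumed.\<close>
lemma pd_commute:
  fixes g :: "point \<Rightarrow> real"
  assumes "open \<Omega>" "Y \<in> \<Omega>" "j \<noteq> l"
    and dj: "\<And>Z. Z \<in> \<Omega> \<Longrightarrow> (\<lambda>t. g (Z(j := t))) field_differentiable (at (Z j))"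
    and dl: "\<And>Z. Z \<in> \<Omega> \<Longrightarrow> (\<lambda>t. g (Z(l := t))) field_differentiable (at (Z l))"
    and djl: "\<And>Z. Z \<in> \<Omega> \<Longrightarrow> (\<lambda>t. pd j g (Z(l := t))) field_differentiable (at (Z l))"
    and dlj: "\<And>Z. Z \<in> \<Omega> \<Longrightarrow> (\<lambda>t. pd l g (Z(j := t))) field_differentiable (at (Z j))"
    and cont_lj: "continuous_on \<Omega> (pd l (pd j g))"
    and cont_jl: "continuous_on \<Omega> (pd j (pd l g))"
  shows "pd l (pd j g) Y = pd j (pd l g) Y"
proof (rule ccontr)
  define v1 where "v1 = pd l (pd j g) Y"
  define v2 where "v2 = pd j (pd l g) Y"
  define e where "e = \<bar>v1 - v2\<bar> / 2"
  assume "pd l (pd j g) Y \<noteq> pd j (pd l g) Y"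
  then have "e > 0" unfolding e_def v1_def v2_def by simp
  define W where "W = (pd l (pd j g) -` ball v1 e \<inter> \<Omega>) \<inter> (pd j (pd l g) -` ball v2 e \<inter> \<Omega>)"
  have "open (pd l (pd j g) -` ball v1 e \<inter> \<Omega>)" "open (pd j (pd l g) -` ball v2 e \<inter> \<Omega>)"
    using cont_lj cont_jl assms(1) by (simp_all add: continuous_on_open_vimage)
  then have "open W" unfolding W_def by (rule open_Int)
  have "Y \<in> W" using assms(2) \<open>e > 0\<close> unfolding W_def by (simp flip: v1_def v2_def)
  have "W \<subseteq> \<Omega>" unfolding W_def by auto
  then have dj_W: "\<And>Z. Z \<in> W \<Longrightarrow> (\<lambda>t. g (Z(j := t))) field_differentiable (at (Z j))"
    and dl_W: "\<And>Z. Z \<in> W \<Longrightarrow> (\<lambda>t. g (Z(l := t))) field_differentiable (at (Z l))"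
    and djl_W: "\<And>Z. Z \<in> W \<Longrightarrow> (\<lambda>t. pd j g (Z(l := t))) field_differentiable (at (Z l))"
    and dlj_W: "\<And>Z. Z \<in> W \<Longrightarrow> (\<lambda>t. pd l g (Z(j := t))) field_differentiable (at (Z j))"
    using dj dl djl dlj by auto
  show False
  proof (rule open_contains_coordinate_box[OF \<open>open W\<close> \<open>Y \<in> W\<close>])
    fix d assume d: "d > 0" "\<And>Z. \<forall>i. \<bar>Z i - Y i\<bar> < d \<Longrightarrow> Z \<in> W"
    show False
    proof (rule mixed_partials_meet[OF assms(3) d dj_W dl_W djl_W dlj_W])
      fix P Q assume "P \<in> W" "Q \<in> W" "pd l (pd j g) P = pd j (pd l g) Q"
      then have "\<bar>pd l (pd j g) P - v1\<bar> < e" "\<bar>pd l (pd j g) P - v2\<bar> < e"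
        unfolding W_def by (auto simp: dist_real_def abs_minus_commute)
      then show False unfolding e_def by (simp add: abs_if split: if_split_asm)
    qed
  qed
qed

section \<open>Derivatives of exp_pair\<close>

lemma has_field_derivative_exp_cos:
  "((\<lambda>t. exp_cos r (X(j := t))) has_field_derivative
     (if j = 0 then r * exp_cos r X else if j = 1 then - (r * exp_sin r X) else 0)) (at (X j))"
proof -
  consider "j = 0" | "j = 1" | "j \<noteq> 0" "j \<noteq> 1" by blast
  then show ?thesis
  proof cases
    case 1
    then show ?thesis
      by (simp add: exp_cos_def exp_sin_def) (auto intro!: derivative_eq_intros)
  next
    case 2
    then show ?thesis
      by (simp add: exp_cos_def exp_sin_def) (auto intro!: derivative_eq_intros)
  qed (simp add: exp_cos_def)
qed

lemma has_field_derivative_exp_sin: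
  "((\<lambda>t. exp_sin r (X(j := t))) has_field_derivative
     (if j = 0 then r * exp_sin r X else if j = 1 then r * exp_cos r X else 0)) (at (X j))"
proof -
  consider "j = 0" | "j = 1" | "j \<noteq> 0" "j \<noteq> 1" by blast
  then show ?thesis
  proof cases
    case 1
    then show ?thesis
      by (simp add: exp_cos_def exp_sin_def) (auto intro!: derivative_eq_intros)
  next
    case 2
    then show ?thesis
      by (simp add: exp_cos_def exp_sin_def) (auto intro!: derivative_eq_intros)
  qed (simp add: exp_sin_def)
qed

lemma continuous_on_exp_cos [continuous_intros]: "continuous_on S (exp_cos r)"
  unfolding exp_cos_def by (intro continuous_intros)

lemma continuous_on_exp_sin [continuous_intros]: "continuous_on S (exp_sin r)"
  unfolding exp_sin_def by (intro continuous_intros)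

lemma has_cl_partial_exp_act:
  assumes "\<And>X. X \<in> S \<Longrightarrow> ((\<lambda>t. c (X(j := t))) has_field_derivative c' X) (at (X j))"
    and "\<And>X. X \<in> S \<Longrightarrow> ((\<lambda>t. s (X(j := t))) has_field_derivative s' X) (at (X j))"
    and "has_cl_partial j S U U'"
  shows "has_cl_partial j S (\<lambda>X. exp_act m (c X) (s X) (U X))
    (\<lambda>X. cl_add (exp_act m (c' X) (s' X) (U X)) (exp_act m (c X) (s X) (U' X)))"
proof -
  have "has_cl_partial j S (\<lambda>X. exp_act m (c X) (s X) (U X))
    (\<lambda>X. cl_add (cl_add (cl_smul (c' X) (U X)) (cl_smul (c X) (U' X)))
      (cl_add (cl_smul (s' X) (gen_mult m 1 (U X))) (cl_smul (s X) (gen_mult m 1 (U' X)))))"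
    unfolding exp_act_def
    by (intro has_cl_partial_cl_add has_cl_partial_cl_smul has_cl_partial_gen_mult assms)
  then show ?thesis
    by (rule has_cl_partial_cong) (simp add: exp_act_def cl_linear_defs fun_eq_iff algebra_simps)
qed

lemma has_cl_partial_exp_pair:
  assumes "\<And>X. X \<in> S \<Longrightarrow> ((\<lambda>t. c (X(j := t))) has_field_derivative c' X) (at (X j))"
    and "\<And>X. X \<in> S \<Longrightarrow> ((\<lambda>t. s (X(j := t))) has_field_derivative s' X) (at (X j))"
    and "has_cl_partial j S U U'" "has_cl_partial j S V V'"
  shows "has_cl_partial j S (\<lambda>X. exp_pair m \<kappa> (c X) (s X) (U X) (V X))
    (\<lambda>X. cl_add (exp_pair m \<kappa> (c' X) (s' X) (U X) (V X)) (exp_pair m \<kappa> (c X) (s X) (U' X) (V' X)))"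
proof -
  have "((\<lambda>t. - s (X(j := t))) has_field_derivative - s' X) (at (X j))" if "X \<in> S" for X
    using assms(2)[OF that] by (rule DERIV_minus)
  from has_cl_partial_exp_act[OF assms(1) this assms(4)]
  have "has_cl_partial j S (\<lambda>X. cl_smul \<kappa> (exp_act m (c X) (- s X) (V X)))
    (\<lambda>X. cl_smul \<kappa> (cl_add (exp_act m (c' X) (- s' X) (V X)) (exp_act m (c X) (- s X) (V' X))))"
    by (rule has_cl_partial_cl_smul_const)
  from has_cl_partial_cl_add[OF has_cl_partial_exp_act[OF assms(1,2,3)] this]
  show ?thesis
    unfolding exp_pair_def
  proof (rule has_cl_partial_cong)
    fix X
    show "cl_add (cl_add (exp_act m (c' X) (s' X) (U X)) (cl_smul \<kappa> (exp_act m (c' X) (- s' X) (V X))))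
        (cl_add (exp_act m (c X) (s X) (U' X)) (cl_smul \<kappa> (exp_act m (c X) (- s X) (V' X))))
      = cl_add (cl_add (exp_act m (c' X) (s' X) (U X)) (exp_act m (c X) (s X) (U' X)))
        (cl_smul \<kappa> (cl_add (exp_act m (c' X) (- s' X) (V X)) (exp_act m (c X) (- s X) (V' X))))"
      by (simp add: cl_linear_defs fun_eq_iff algebra_simps)
  qed
qed

lemma cl_continuous_on_exp_pair:
  assumes "continuous_on S c" "continuous_on S s" "cl_continuous_on S U" "cl_continuous_on S V"
  shows "cl_continuous_on S (\<lambda>X. exp_pair m \<kappa> (c X) (s X) (U X) (V X))"
  unfolding exp_pair_def exp_act_def
  by (intro cl_continuous_on_cl_add cl_continuous_on_cl_smul cl_continuous_on_gen_mult
      continuous_intros assms)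

locale harmonic_exp_solution =
  fixes m :: nat and \<Omega> :: "point set" and H :: "point \<Rightarrow> clif" and lam :: real
  assumes m: "m \<ge> 2" and lam: "lam \<noteq> 0"
    and harmonic: "harmonic_y m \<Omega> H" and elem: "\<And>y. cl_elem m (H y)"
begin

abbreviation S :: "point set" where "S \<equiv> {X. yproj m X \<in> \<Omega>}"

definition \<kappa> :: real where "\<kappa> = - 1 / (2 * lam)"

definition dH :: "nat \<Rightarrow> point \<Rightarrow> clif" where "dH j X = cl_pd j H (yproj m X)"

definition ddH :: "nat \<Rightarrow> nat \<Rightarrow> point \<Rightarrow> clif" where "ddH j l X = cl_pd j (cl_pd l H) (yproj m X)"

definition DH :: "point \<Rightarrow> clif" where "DH X = cl_sum (\<lambda>l. gen_mult m l (dH l X)) {2..m}"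

definition dDH :: "nat \<Rightarrow> point \<Rightarrow> clif" where
  "dDH j X = cl_sum (\<lambda>l. gen_mult m l (ddH j l X)) {2..m}"

definition f :: "point \<Rightarrow> clif" where
  "f X = exp_pair m \<kappa> (exp_cos lam X) (exp_sin lam X) (H (yproj m X)) (DH X)"

definition f_partial :: "nat \<Rightarrow> point \<Rightarrow> clif" where
  "f_partial j X =
    (if j = 0 then
       exp_pair m \<kappa> (lam * exp_cos lam X) (lam * exp_sin lam X) (H (yproj m X)) (DH X)
     else if j = 1 then
       exp_pair m \<kappa> (- (lam * exp_sin lam X)) (lam * exp_cos lam X) (H (yproj m X)) (DH X)
     else exp_pair m \<kappa> (exp_cos lam X) (exp_sin lam X) (dH j X) (dDH j X))"

lemma open_\<Omega>: "open \<Omega>"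
  using harmonic unfolding harmonic_y_def by blast

lemma H_differentiable:
  "j \<in> {2..m} \<Longrightarrow> Y \<in> \<Omega> \<Longrightarrow> (\<lambda>t. H (Y(j := t)) A) field_differentiable (at (Y j))"
  using harmonic unfolding harmonic_y_def coord_C2_def coord_C1_def by blast

lemma pd_H_differentiable:
  "j \<in> {2..m} \<Longrightarrow> l \<in> {2..m} \<Longrightarrow> Y \<in> \<Omega> \<Longrightarrow>
    (\<lambda>t. pd l (\<lambda>y. H y A) (Y(j := t))) field_differentiable (at (Y j))"
  using harmonic unfolding harmonic_y_def coord_C2_def coord_C1_def by blast

lemma pd_H_continuous: "j \<in> {2..m} \<Longrightarrow> continuous_on \<Omega> (pd j (\<lambda>y. H y A))"
  using harmonic unfolding harmonic_y_def coord_C2_def coord_C1_def by blast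

lemma pd_pd_H_continuous:
  "j \<in> {2..m} \<Longrightarrow> l \<in> {2..m} \<Longrightarrow> continuous_on \<Omega> (pd j (pd l (\<lambda>y. H y A)))"
  using harmonic unfolding harmonic_y_def coord_C2_def coord_C1_def by blast

lemma has_cl_partial_H:
  "has_cl_partial j S (\<lambda>X. H (yproj m X)) (if j \<in> {2..m} then dH j else (\<lambda>X. cl_zero))"
proof (cases "j \<in> {2..m}")
  case True
  have "has_cl_partial j S (\<lambda>X. H (yproj m X)) (\<lambda>X. cl_pd j H (yproj m X))"
    by (rule has_cl_partial_comp_yproj_in[OF True H_differentiable[OF True]])
  then show ?thesis unfolding if_P[OF True] dH_def .
next
  case False
  then show ?thesis unfolding if_not_P[OF False] by (rule has_cl_partial_comp_yproj_out)
qed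

lemma has_cl_partial_dH:
  assumes "l \<in> {2..m}"
  shows "has_cl_partial j S (dH l) (if j \<in> {2..m} then ddH j l else (\<lambda>X. cl_zero))"
proof (cases "j \<in> {2..m}")
  case True
  have "has_cl_partial j S (\<lambda>X. cl_pd l H (yproj m X)) (\<lambda>X. cl_pd j (cl_pd l H) (yproj m X))"
  proof (rule has_cl_partial_comp_yproj_in[OF True])
    fix A Y assume "Y \<in> \<Omega>"
    then show "(\<lambda>t. cl_pd l H (Y(j := t)) A) field_differentiable at (Y j)"
      unfolding cl_pd_def by (rule pd_H_differentiable[OF True assms])
  qed
  then show ?thesis unfolding if_P[OF True] dH_def ddH_def .
next
  case False
  then show ?thesis unfolding if_not_P[OF False] dH_def by (rule has_cl_partial_comp_yproj_out)
qed

lemma has_cl_partial_DH: "has_cl_partial j S DH (if j \<in> {2..m} then dDH j else (\<lambda>X. cl_zero))"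
proof (cases "j \<in> {2..m}")
  case True
  have "has_cl_partial j S (dH l) (ddH j l)" if "l \<in> {2..m}" for l
    using has_cl_partial_dH[OF that, of j] unfolding if_P[OF True] .
  then have "has_cl_partial j S DH (\<lambda>X. cl_sum (\<lambda>l. gen_mult m l (ddH j l X)) {2..m})"
    unfolding DH_def by (intro has_cl_partial_cl_sum has_cl_partial_gen_mult) auto
  then show ?thesis unfolding if_P[OF True] dDH_def .
next
  case False
  have "has_cl_partial j S (dH l) (\<lambda>X. cl_zero)" if "l \<in> {2..m}" for l
    using has_cl_partial_dH[OF that, of j] unfolding if_not_P[OF False] .
  then have "has_cl_partial j S DH (\<lambda>X. cl_sum (\<lambda>l. gen_mult m l cl_zero) {2..m})"
    unfolding DH_def by (intro has_cl_partial_cl_sum has_cl_partial_gen_mult) auto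
  then show ?thesis
    unfolding if_not_P[OF False] by (simp add: gen_mult_cl_zero) (simp add: cl_sum_def cl_zero_def)
qed

lemma cl_continuous_on_H: "cl_continuous_on S (\<lambda>X. H (yproj m X))"
  unfolding cl_continuous_on_def
proof
  fix A
  show "continuous_on S (\<lambda>X. H (yproj m X) A)"
    by (rule continuous_on_comp_yproj[OF open_\<Omega>, of m "\<lambda>y. H y A"])
      (simp_all add: H_differentiable pd_H_continuous)
qed

lemma cl_continuous_on_dH: "l \<in> {2..m} \<Longrightarrow> cl_continuous_on S (dH l)"
  unfolding dH_def by (rule cl_continuous_on_comp_yproj) (simp add: cl_pd_def pd_H_continuous)

lemma cl_continuous_on_ddH: "j \<in> {2..m} \<Longrightarrow> l \<in> {2..m} \<Longrightarrow> cl_continuous_on S (ddH j l)"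
  unfolding ddH_def by (rule cl_continuous_on_comp_yproj) (simp add: cl_pd_def pd_pd_H_continuous)

lemma cl_continuous_on_DH: "cl_continuous_on S DH"
  unfolding DH_def by (intro cl_continuous_on_cl_sum cl_continuous_on_gen_mult cl_continuous_on_dH)

lemma cl_continuous_on_dDH: "j \<in> {2..m} \<Longrightarrow> cl_continuous_on S (dDH j)"
  unfolding dDH_def by (intro cl_continuous_on_cl_sum cl_continuous_on_gen_mult cl_continuous_on_ddH)

lemma cl_continuous_on_f_partial: "j \<in> {0..m} \<Longrightarrow> cl_continuous_on S (f_partial j)"
  unfolding f_partial_def
  by (cases "j = 0"; cases "j = 1")
    (auto intro!: cl_continuous_on_exp_pair continuous_intros cl_continuous_on_H cl_continuous_on_DH
      cl_continuous_on_dH cl_continuous_on_dDH)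

lemma cl_elem_DH: "cl_elem m (DH X)"
  unfolding DH_def by (intro cl_elem_cl_sum cl_elem_gen_mult)

lemma has_cl_partial_f:
  assumes "j \<in> {0..m}"
  shows "has_cl_partial j S f (f_partial j)"
proof -
  have "has_cl_partial j S f (\<lambda>X. cl_add
      (exp_pair m \<kappa> (if j = 0 then lam * exp_cos lam X else if j = 1 then - (lam * exp_sin lam X) else 0)
        (if j = 0 then lam * exp_sin lam X else if j = 1 then lam * exp_cos lam X else 0)
        (H (yproj m X)) (DH X))
      (exp_pair m \<kappa> (exp_cos lam X) (exp_sin lam X)
        ((if j \<in> {2..m} then dH j else (\<lambda>X. cl_zero)) X) ((if j \<in> {2..m} then dDH j else (\<lambda>X. cl_zero)) X)))"
    unfolding f_def
    by (rule has_cl_partial_exp_pair[OF has_field_derivative_exp_cos has_field_derivative_exp_sin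
          has_cl_partial_H has_cl_partial_DH])
  then show ?thesis
    by (rule has_cl_partial_cong)
      (use assms in \<open>auto simp: f_partial_def exp_pair_cl_zero exp_pair_zero_coeffs\<close>)
qed

lemma f_partial_zero: "f_partial 0 X = cl_smul lam (f X)"
  by (simp add: f_partial_def f_def exp_pair_def exp_act_def cl_linear_defs fun_eq_iff algebra_simps)

lemma ddH_commute:
  assumes "X \<in> S" "j \<in> {2..m}" "l \<in> {2..m}"
  shows "ddH j l X = ddH l j X"
proof (cases "j = l")
  case False
  show ?thesis
  proof
    fix A
    have "pd j (pd l (\<lambda>y. H y A)) (yproj m X) = pd l (pd j (\<lambda>y. H y A)) (yproj m X)"
      using assms by (intro pd_commute[OF open_\<Omega>] False[symmetric] H_differentiable
          pd_H_differentiable pd_pd_H_continuous) auto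
    then show "ddH j l X A = ddH l j X A" by (simp add: ddH_def cl_pd_def)
  qed
qed simp

lemma sum_gen_mult_dDH:
  assumes "X \<in> S"
  shows "cl_sum (\<lambda>j. gen_mult m j (dDH j X)) {2..m} = cl_zero"
proof -
  have "cl_sum (\<lambda>j. ddH j j X) {2..m} = cl_zero"
    using harmonic assms unfolding harmonic_y_def ddH_def by auto
  moreover have "cl_elem m (ddH j j X)" for j
    unfolding ddH_def by (intro cl_elem_cl_pd elem)
  ultimately show ?thesis
    unfolding dDH_def using ddH_commute[OF assms]
    by (subst gen_mult_double_sum_symmetric) (auto simp: cl_linear_defs)
qed

lemma dirac_f:
  assumes "X \<in> S"
  shows "dirac m f X = cl_zero"
proof -
  let ?c = "exp_cos lam X" and ?s = "exp_sin lam X"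
  have pd_f: "cl_pd j f X = f_partial j X" if "j \<in> {0..m}" for j
    using has_cl_partial_imp_cl_pd[OF has_cl_partial_f[OF that] assms] .
  have x_terms: "cl_add (f_partial 0 X) (gen_mult m 1 (f_partial 1 X))
      = cl_smul (-1) (exp_act m ?c (- ?s) (DH X))"
    using exp_pair_plus_gen_mult_one[OF elem cl_elem_DH, where \<kappa> = \<kappa> and r = lam and c = ?c and s = ?s]
      m lam
    by (simp add: f_partial_def \<kappa>_def)
  have "cl_sum (\<lambda>j. gen_mult m j (f_partial j X)) {2..m}
      = cl_sum (\<lambda>j. exp_pair m \<kappa> ?c (- ?s) (gen_mult m j (dH j X)) (gen_mult m j (dDH j X))) {2..m}"
    unfolding cl_sum_def by (intro ext sum.cong) (auto simp: f_partial_def gen_mult_exp_pair)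
  also have "\<dots> = exp_pair m \<kappa> ?c (- ?s) (DH X) (cl_sum (\<lambda>j. gen_mult m j (dDH j X)) {2..m})"
    unfolding exp_pair_cl_sum DH_def ..
  also have "\<dots> = exp_act m ?c (- ?s) (DH X)"
    by (simp add: sum_gen_mult_dDH[OF assms] exp_pair_def)
  finally have y_terms: "cl_sum (\<lambda>j. gen_mult m j (f_partial j X)) {2..m} = exp_act m ?c (- ?s) (DH X)" .
  have "cl_sum (\<lambda>j. gen_mult m j (cl_pd j f X)) {2..m} = cl_sum (\<lambda>j. gen_mult m j (f_partial j X)) {2..m}"
    unfolding cl_sum_def using pd_f by (intro ext sum.cong) auto
  moreover have "1 \<le> m" using m by simp
  ultimately have "dirac m f X = cl_add (f_partial 0 X) (cl_add (gen_mult m 1 (f_partial 1 X))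
      (cl_sum (\<lambda>j. gen_mult m j (f_partial j X)) {2..m}))"
    using pd_f by (simp add: dirac_split)
  then show ?thesis
    using fun_cong[OF x_terms] fun_cong[OF y_terms]
    by (simp add: cl_add_def cl_smul_def cl_zero_def fun_eq_iff add.assoc[symmetric])
qed

lemma left_monogenic_f: "left_monogenic m S f"
  unfolding left_monogenic_def
  using open_yproj_preimage[OF open_\<Omega>] dirac_f
    coord_C1_if_has_cl_partials[OF has_cl_partial_f cl_continuous_on_f_partial] by blast

lemma Lop_f: "X \<in> S \<Longrightarrow> Lop m n a f X = cl_smul (\<Sum>i=0..n. a i * lam ^ (n - i)) (f X)"
  by (intro Lop_eigenfunction hyperD_power_eigenfunction[OF open_yproj_preimage[OF open_\<Omega>]
        has_cl_partial_f dirac_f f_partial_zero])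

lemma f_eq:
  "cl_add (cl_mult m (cl_exp_z lam X) (H (yproj m X)))
     (cl_smul (- 1 / (2 * lam)) (cl_mult m (cl_exp_zbar lam X) (dirac_y m H (yproj m X)))) = f X"
proof -
  have "dirac_y m H (yproj m X) = DH X"
    by (simp add: dirac_y_eq_gen_mult DH_def dH_def)
  then show ?thesis
    using m by (simp add: f_def exp_pair_def \<kappa>_def cl_mult_exp_z cl_mult_exp_zbar elem cl_elem_DH)
qed

end

theorem proposition2:
  fixes m n :: nat and a :: "nat \<Rightarrow> real" and lam :: real
    and \<Omega> :: "point set" and H :: "point \<Rightarrow> clif"
  assumes "m \<ge> 2"
    and "lam \<noteq> 0"
    and "(\<Sum>i=0..n. a i * lam ^ (n - i)) = 0"
    and "harmonic_y m \<Omega> H"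
    and "\<forall>y. cl_elem m (H y)"
  shows "let f = (\<lambda>X. cl_add (cl_mult m (cl_exp_z lam X) (H (yproj m X)))
                    (cl_smul (- 1 / (2 * lam)) (cl_mult m (cl_exp_zbar lam X) (dirac_y m H (yproj m X)))));
             S = {X. yproj m X \<in> \<Omega>}
         in left_monogenic m S f \<and> (\<forall>X\<in>S. Lop m n a f X = cl_zero)"
proof -
  interpret harmonic_exp_solution m \<Omega> H lam
    using assms by unfold_locales auto
  show ?thesis
    unfolding Let_def f_eq[abs_def] using left_monogenic_f Lop_f assms(3)
    by (simp add: cl_smul_def cl_zero_def)
qed

end
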